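(* For $n$ a power of 2, for all but an $o(1)$ fraction (as $n\to\infty$) of the sets $A\subseteq\{0,1\}^{\log n}$ with $|A|=n/2$, every classical probabilistic property tester for $P_A=\{x\in\{0,1\}^n:\exists y\in A,\ x=h(y)\}$ with distance parameter $1/3$ (even allowing two-sided error) makes $\Omega(\log n)$ queries.
   Context: Logarithms are base 2. Positions $i\in\{1,\dots,n\}$ are identified with vectors in $\mathbb{F}_2^{\log n}$; the Hadamard code of $y\in\{0,1\}^{\log n}$ is $h(y)\in\{0,1\}^n$ with $h(y)_i=y\cdot i$ over $\mathbb{F}_2$. For $P\subseteq\{0,1\}^n$, $x$ is $\epsilon$-far from $P$ if it differs from every element of $P$ in more than $\epsilon n$ positions. A classical property tester for $P$ with distance parameter $\epsilon$ is a probabilistic (possibly adaptive) algorithm with query access to the bits of $x$ that accepts every $x\in P$ with probability at least $2/3$ and every $x$ that is $\epsilon$-far from $P$ with probability at most $1/3$; its complexity is the number of queries. *)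

theory Defs
  imports "HOL-Probability.Probability"
begin

text \<open>Positions i in {0..<2^k} (n = 2^k, k = log n) are identified with vectors in F_2^k
  via their binary representation; likewise y in {0,1}^k is a natural number y < 2^k.\<close>

definition f2_dot :: "nat \<Rightarrow> nat \<Rightarrow> nat \<Rightarrow> bool" where
  "f2_dot k y i = odd (card {j. j < k \<and> bit y j \<and> bit i j})"

definition hadamard :: "nat \<Rightarrow> nat \<Rightarrow> bool list" where
  "hadamard k y = map (\<lambda>i. f2_dot k y i) [0..<2^k]"

definition P_A :: "nat \<Rightarrow> nat set \<Rightarrow> bool list set" where
  "P_A k A = {x. \<exists>y\<in>A. x = hadamard k y}"

definition hdist :: "bool list \<Rightarrow> bool list \<Rightarrow> nat" where
  "hdist x z = card {i. i < length x \<and> x ! i \<noteq> z ! i}"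

definition far :: "nat \<Rightarrow> bool list set \<Rightarrow> real \<Rightarrow> bool list \<Rightarrow> bool" where
  "far n P eps x = (\<forall>z\<in>P. real (hdist x z) > eps * real n)"

text \<open>Deterministic adaptive query algorithms = decision trees. A query of position i
  returns bit i of the input (out-of-range queries return False).\<close>
datatype dtree = Leaf bool | Query nat dtree dtree

fun eval_tree :: "dtree \<Rightarrow> bool list \<Rightarrow> bool" where
  "eval_tree (Leaf b) x = b"
| "eval_tree (Query i t1 t0) x =
     (if i < length x \<and> x ! i then eval_tree t1 x else eval_tree t0 x)"

fun depth :: "dtree \<Rightarrow> nat" where
  "depth (Leaf b) = 0"
| "depth (Query i t1 t0) = Suc (max (depth t1) (depth t0))"

text \<open>A probabilistic (adaptive) algorithm = probability distribution over decision trees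
  (randomness fixed in advance). Its query complexity is the maximal depth in its support.\<close>
definition accept_prob :: "dtree pmf \<Rightarrow> bool list \<Rightarrow> real" where
  "accept_prob T x = measure_pmf.prob T {t. eval_tree t x}"

definition is_tester :: "nat \<Rightarrow> bool list set \<Rightarrow> real \<Rightarrow> dtree pmf \<Rightarrow> bool" where
  "is_tester n P eps T =
     ((\<forall>x\<in>P. accept_prob T x \<ge> 2/3) \<and>
      (\<forall>x. length x = n \<and> far n P eps x \<longrightarrow> accept_prob T x \<le> 1/3))"

definition makes_at_most :: "dtree pmf \<Rightarrow> nat \<Rightarrow> bool" where
  "makes_at_most T q = (\<forall>t\<in>set_pmf T. depth t \<le> q)"

end

theory Submission
  imports Defs "HOL-Real_Asymp.Real_Asymp"
begin

text \<open>Distinct Hadamard codewords are at distance exactly n/2, so a tester for P_A accepts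
  h(y) with probability at least 2/3 for y in A and at most 1/3 for y outside A. Averaging
  over the tester's random decision tree, some tree t in its support accepts a set S_t of
  codewords with |A \<triangle> S_t| \<le> n/3. Hence a set A testable with q queries is determined by a
  depth-q tree with queries in {0..n} and a set of at most n/3 corrections: at most
  (n+3)^(2^(q+1)) \<cdot> (3/2)^n 2^(n/3) possibilities, against at least 2^n/(n+1) sets of size n/2.
  For q < (log n)/4 the ratio tends to 0.\<close>

lemma bit_imp_less_of_less_exp: "(i::nat) < 2^k \<Longrightarrow> bit i j \<Longrightarrow> j < k"
  by (metis bit_take_bit_iff take_bit_nat_eq_self_iff)

lemma flip_bit_less_exp: "j < k \<Longrightarrow> (i::nat) < 2^k \<Longrightarrow> flip_bit j i < 2^k"
  by (metis take_bit_flip_bit_eq take_bit_nat_eq_self_iff not_le take_bit_nat_less_exp)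

lemma flip_bit_flip_bit [simp]: "flip_bit j (flip_bit j (i::nat)) = i"
  by (rule bit_eqI) (auto simp: bit_flip_bit_iff)

lemma f2_dot_flip_bit:
  assumes "j < k"
  shows "f2_dot k y (flip_bit j i) \<longleftrightarrow> f2_dot k y i \<noteq> bit y j"
proof -
  define S where "S = {j'. j' < k \<and> bit y j' \<and> bit i j'}"
  define S' where "S' = {j'. j' < k \<and> bit y j' \<and> bit (flip_bit j i) j'}"
  have "finite S" "finite S'"
    unfolding S_def S'_def by auto
  have "odd (card S') \<longleftrightarrow> odd (card S) \<noteq> bit y j"
  proof (cases "bit y j")
    case False
    then have "S' = S"
      unfolding S_def S'_def by (auto simp: bit_flip_bit_iff)
    with False show ?thesis by simp
  next
    case True
    with assms have "S = insert j S' \<and> j \<notin> S' \<or> S' = insert j S \<and> j \<notin> S"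
      unfolding S_def S'_def by (cases "bit i j") (auto simp: bit_flip_bit_iff)
    with True \<open>finite S\<close> \<open>finite S'\<close> show ?thesis by auto
  qed
  then show ?thesis
    unfolding f2_dot_def S_def S'_def .
qed

text \<open>Flipping a bit on which y and y' differ exchanges the positions where h(y) and h(y')
  agree with those where they disagree.\<close>

lemma hdist_hadamard:
  assumes "y < 2^k" "y' < 2^k" "y \<noteq> y'"
  shows "2 * hdist (hadamard k y) (hadamard k y') = 2^k"
proof -
  obtain j where j: "bit y j \<noteq> bit y' j"
    using assms(3) bit_eq_iff by blast
  with assms(1,2) have "j < k"
    using bit_imp_less_of_less_exp by blast
  define D where "D = {i. i < (2::nat)^k \<and> f2_dot k y i \<noteq> f2_dot k y' i}"
  define E where "E = {i. i < (2::nat)^k \<and> f2_dot k y i = f2_dot k y' i}"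
  have flip: "f2_dot k y (flip_bit j i) \<noteq> f2_dot k y' (flip_bit j i) \<longleftrightarrow>
      f2_dot k y i = f2_dot k y' i" for i
    using f2_dot_flip_bit[OF \<open>j < k\<close>] j by auto
  have "flip_bit j ` D = E"
  proof
    show "flip_bit j ` D \<subseteq> E"
      unfolding D_def E_def using flip flip_bit_less_exp[OF \<open>j < k\<close>] by auto
    show "E \<subseteq> flip_bit j ` D"
    proof
      fix i assume "i \<in> E"
      then have "flip_bit j i \<in> D"
        unfolding D_def E_def using flip flip_bit_less_exp[OF \<open>j < k\<close>] by auto
      then show "i \<in> flip_bit j ` D"
        by (metis flip_bit_flip_bit image_eqI)
    qed
  qed
  moreover have "inj_on (flip_bit j) D"
    by (rule inj_onI) (metis flip_bit_flip_bit)
  ultimately have "card E = card D"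
    by (metis card_image)
  moreover have "card D + card E = 2^k"
  proof -
    have "card D + card E = card (D \<union> E)"
      by (rule card_Un_disjoint[symmetric]) (auto simp: D_def E_def)
    also have "D \<union> E = {..<2^k}"
      unfolding D_def E_def by auto
    finally show ?thesis
      by simp
  qed
  moreover have "hdist (hadamard k y) (hadamard k y') = card D"
    unfolding hdist_def hadamard_def D_def by (rule arg_cong[where f = card]) auto
  ultimately show ?thesis
    by linarith
qed

lemma far_hadamard:
  assumes "A \<subseteq> {..<2^k}" "y < 2^k" "y \<notin> A" "eps < 1/2"
  shows "far (2^k) (P_A k A) eps (hadamard k y)"
  unfolding far_def P_A_def
proof clarify
  fix y' assume "y' \<in> A"
  with assms(1,3) have "2 * hdist (hadamard k y) (hadamard k y') = 2^k"
    by (intro hdist_hadamard assms(2)) auto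
  then have "2 * real (hdist (hadamard k y) (hadamard k y')) = 2^k"
    by (metis of_nat_mult of_nat_numeral of_nat_power)
  moreover have "eps * 2^k < 1/2 * 2^k"
    using assms(4) by (intro mult_strict_right_mono) auto
  ultimately show "eps * real (2^k) < real (hdist (hadamard k y) (hadamard k y'))"
    unfolding of_nat_power of_nat_numeral by linarith
qed

text \<open>On inputs of length n every position \<open>\<ge> n\<close> is read as False, so all of them may be
  replaced by n.\<close>

fun clamp_queries :: "nat \<Rightarrow> dtree \<Rightarrow> dtree" where
  "clamp_queries n (Leaf b) = Leaf b"
| "clamp_queries n (Query i t1 t0) = Query (min i n) (clamp_queries n t1) (clamp_queries n t0)"

lemma eval_tree_clamp_queries: "length x = n \<Longrightarrow> eval_tree (clamp_queries n t) x = eval_tree t x"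
  by (induction t) (auto simp: min_def)

fun bounded_trees :: "nat \<Rightarrow> nat \<Rightarrow> dtree set" where
  "bounded_trees n 0 = {Leaf True, Leaf False}"
| "bounded_trees n (Suc q) = {Leaf True, Leaf False} \<union>
     (\<lambda>(i, t1, t0). Query i t1 t0) ` ({..n} \<times> bounded_trees n q \<times> bounded_trees n q)"

lemma clamp_queries_in_bounded_trees: "depth t \<le> q \<Longrightarrow> clamp_queries n t \<in> bounded_trees n q"
proof (induction t arbitrary: q)
  case (Leaf b)
  then show ?case by (cases q; cases b) auto
next
  case (Query i t1 t0)
  then obtain q' where "q = Suc q'" by (cases q) auto
  with Query show ?case by (auto simp: image_iff)
qed

lemma finite_bounded_trees: "finite (bounded_trees n q)"
  by (induction q) auto

lemma card_bounded_trees: "card (bounded_trees n q) \<le> (n + 3) ^ 2 ^ (q + 1)"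
proof -
  have "(n + 3) * card (bounded_trees n q) \<le> (n + 3) ^ 2 ^ (q + 1)"
  proof (induction q)
    case 0
    have "(n + 3) * 2 \<le> (n + 3) ^ 2"
      unfolding power2_eq_square by (intro mult_le_mono2) simp
    then show ?case by (simp add: card_insert_if)
  next
    case (Suc q)
    define c where "c = card (bounded_trees n q)"
    have "Leaf True \<in> bounded_trees n q"
      by (cases q) auto
    then have "0 < c"
      unfolding c_def using finite_bounded_trees card_gt_0_iff by blast
    then have "1 \<le> c * c"
      by (simp add: Suc_le_eq)
    have "card (bounded_trees n (Suc q)) \<le> card {Leaf True, Leaf False} +
        card ((\<lambda>(i, t1, t0). Query i t1 t0) ` ({..n} \<times> bounded_trees n q \<times> bounded_trees n q))"
      unfolding bounded_trees.simps by (rule card_Un_le)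
    also have "\<dots> \<le> 2 + card ({..n} \<times> bounded_trees n q \<times> bounded_trees n q)"
      by (intro add_mono card_image_le) (auto simp: card_insert_if finite_bounded_trees)
    also have "\<dots> = 2 + (n + 1) * c * c"
      by (simp add: card_cartesian_product c_def algebra_simps)
    also have "\<dots> \<le> (n + 3) * c * c"
      using \<open>1 \<le> c * c\<close> by (simp add: algebra_simps)
    finally have "(n + 3) * card (bounded_trees n (Suc q)) \<le> (n + 3) * ((n + 3) * c * c)"
      by (rule mult_le_mono2)
    also have "\<dots> = ((n + 3) * c) ^ 2"
      by (simp add: power2_eq_square algebra_simps)
    also have "\<dots> \<le> ((n + 3) ^ 2 ^ (q + 1)) ^ 2"
      using Suc unfolding c_def by (rule power_mono) simp
    finally show ?case
      by (simp add: power_mult[symmetric] mult.commute)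
  qed
  then show ?thesis
    by (rule le_trans[rotated]) simp
qed

lemma card_bounded_trees_le_powr:
  "real (card (bounded_trees n q)) \<le> (real n + 3) powr (2 * 2 powr real q)"
proof -
  have "real (card (bounded_trees n q)) \<le> real ((n + 3) ^ 2 ^ (q + 1))"
    using card_bounded_trees by (simp only: of_nat_le_iff)
  also have "\<dots> = (real n + 3) powr (2 * 2 powr real q)"
    by (simp add: powr_realpow[symmetric] powr_add)
  finally show ?thesis .
qed

lemma card_small_subsets:
  assumes "finite X"
  shows "real (card {D. D \<subseteq> X \<and> real (card D) \<le> r}) \<le> (3/2) ^ card X * 2 powr r"
proof -
  let ?small = "{D. D \<subseteq> X \<and> real (card D) \<le> r}"
  have "(\<Sum>D\<in>Pow X. (1/2::real) ^ card D) = (\<Sum>D\<in>Pow X. (\<Prod>x\<in>D. 1/2) * (\<Prod>x\<in>X - D. 1))"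
    by simp
  also have "\<dots> = (\<Prod>x\<in>X. 1/2 + 1)"
    by (rule prod_add[symmetric]) (rule assms)
  finally have weights: "(\<Sum>D\<in>Pow X. (1/2::real) ^ card D) = (3/2) ^ card X"
    by (simp add: assms)
  have "real (card ?small) * (1/2) powr r = (\<Sum>D\<in>?small. (1/2::real) powr r)"
    by simp
  also have "\<dots> \<le> (\<Sum>D\<in>?small. (1/2::real) ^ card D)"
    by (intro sum_mono) (auto simp: powr_realpow[symmetric] intro: powr_mono')
  also have "\<dots> \<le> (\<Sum>D\<in>Pow X. (1/2::real) ^ card D)"
    using assms by (intro sum_mono2) auto
  finally have "real (card ?small) / 2 powr r \<le> (3/2) ^ card X"
    unfolding weights by (simp add: powr_divide)
  then show ?thesis
    by (simp add: pos_divide_le_eq)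
qed

lemma card_half_subsets_ge:
  "2^n / (real n + 1) \<le> real (card {A. A \<subseteq> {..<n} \<and> card A = n div 2})"
proof -
  have "(2::nat) ^ n = (\<Sum>j\<le>n. n choose j)"
    by (rule choose_row_sum[symmetric])
  also have "\<dots> \<le> (\<Sum>j\<le>n. n choose (n div 2))"
    by (intro sum_mono binomial_maximum)
  also have "\<dots> = (n + 1) * card {A. A \<subseteq> {..<n} \<and> card A = n div 2}"
    by (simp add: n_subsets)
  finally have "real (2 ^ n) \<le> real ((n + 1) * card {A. A \<subseteq> {..<n} \<and> card A = n div 2})"
    by (simp only: of_nat_le_iff)
  then show ?thesis
    by (simp add: divide_le_eq algebra_simps)
qed

lemma pmf_exists_ge_expectation:
  fixes p :: "'a pmf" and f :: "'a \<Rightarrow> real"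
  assumes "finite (set_pmf p)" "c \<le> measure_pmf.expectation p f"
  shows "\<exists>x\<in>set_pmf p. c \<le> f x"
proof (rule ccontr)
  assume none: "\<not> ?thesis"
  have less: "pmf p x * f x < pmf p x * c" if "x \<in> set_pmf p" for x
    using that none by (intro mult_strict_left_mono) (auto simp: pmf_positive)
  have "measure_pmf.expectation p f = (\<Sum>x\<in>set_pmf p. pmf p x * f x)"
    by (simp add: integral_measure_pmf[OF assms(1)])
  also have "\<dots> < (\<Sum>x\<in>set_pmf p. pmf p x * c)"
    using assms(1) set_pmf_not_empty less by (rule sum_strict_mono)
  also have "\<dots> = c"
    by (simp add: sum_distrib_right[symmetric] sum_pmf_eq_1 assms(1))
  finally show False
    using assms(2) by simp
qed

lemma expectation_card_Int:
  fixes R :: "'a set pmf"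
  assumes "finite X"
  shows "measure_pmf.expectation R (\<lambda>S. real (card (X \<inter> S))) = (\<Sum>y\<in>X. measure_pmf.prob R {S. y \<in> S})"
proof -
  have "real (card (X \<inter> S)) = (\<Sum>y\<in>X. indicator {S. y \<in> S} S)" for S
    using assms by (simp add: indicator_def sum_of_bool_eq)
  then have "measure_pmf.expectation R (\<lambda>S. real (card (X \<inter> S)))
      = measure_pmf.expectation R (\<lambda>S. \<Sum>y\<in>X. indicator {S. y \<in> S} S)"
    by (simp only:)
  also have "\<dots> = (\<Sum>y\<in>X. measure_pmf.expectation R (indicator {S. y \<in> S}))"
    by (rule Bochner_Integration.integral_sum) (auto intro: measure_pmf.integrable_const_bound[where B = 1])
  also have "\<dots> = (\<Sum>y\<in>X. measure_pmf.prob R {S. y \<in> S})"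
    by simp
  finally show ?thesis .
qed

text \<open>Pushing T forward to the finitely many sets of accepted points makes the averaging
  argument a finite one.\<close>

lemma exists_tree_acceptance_gap:
  fixes T :: "dtree pmf" and enc :: "'a \<Rightarrow> bool list"
  assumes "finite A" "finite B"
  shows "\<exists>t\<in>set_pmf T.
    (\<Sum>y\<in>A. accept_prob T (enc y)) - (\<Sum>y\<in>B. accept_prob T (enc y))
      \<le> real (card {y\<in>A. eval_tree t (enc y)}) - real (card {y\<in>B. eval_tree t (enc y)})"
proof -
  define sel where "sel t = {y\<in>A \<union> B. eval_tree t (enc y)}" for t
  define R where "R = map_pmf sel T"
  have "set_pmf R \<subseteq> Pow (A \<union> B)"
    unfolding R_def sel_def by auto
  then have fin: "finite (set_pmf R)"
    using assms by (meson finite_Pow_iff finite_UnI finite_subset)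
  have expect: "measure_pmf.expectation R (\<lambda>S. real (card (X \<inter> S))) = (\<Sum>y\<in>X. accept_prob T (enc y))"
    if "X \<subseteq> A \<union> B" for X
  proof -
    have "finite X"
      using that assms finite_subset by blast
    then have "measure_pmf.expectation R (\<lambda>S. real (card (X \<inter> S))) = (\<Sum>y\<in>X. measure_pmf.prob R {S. y \<in> S})"
      by (rule expectation_card_Int)
    also have "\<dots> = (\<Sum>y\<in>X. accept_prob T (enc y))"
      using that unfolding R_def accept_prob_def sel_def
      by (intro sum.cong refl arg_cong[where f = "measure_pmf.prob T"]) auto
    finally show ?thesis .
  qed
  have "(\<Sum>y\<in>A. accept_prob T (enc y)) - (\<Sum>y\<in>B. accept_prob T (enc y))
      = measure_pmf.expectation R (\<lambda>S. real (card (A \<inter> S)) - real (card (B \<inter> S)))"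
    by (simp add: expect integrable_measure_pmf_finite[OF fin])
  then have "\<exists>S\<in>set_pmf R. (\<Sum>y\<in>A. accept_prob T (enc y)) - (\<Sum>y\<in>B. accept_prob T (enc y))
      \<le> real (card (A \<inter> S)) - real (card (B \<inter> S))"
    by (intro pmf_exists_ge_expectation[OF fin]) simp
  then obtain t where "t \<in> set_pmf T"
    and "(\<Sum>y\<in>A. accept_prob T (enc y)) - (\<Sum>y\<in>B. accept_prob T (enc y))
      \<le> real (card (A \<inter> sel t)) - real (card (B \<inter> sel t))"
    unfolding R_def by auto
  moreover have "A \<inter> sel t = {y\<in>A. eval_tree t (enc y)}" "B \<inter> sel t = {y\<in>B. eval_tree t (enc y)}"
    unfolding sel_def by auto
  ultimately show ?thesis
    by auto
qed

lemma card_sym_diff: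
  assumes "finite A" "finite S"
  shows "card (sym_diff A S) + card (A \<inter> S) = card A + card (S - A)"
proof -
  have "card (sym_diff A S) = card (A - S) + card (S - A)"
    using assms by (intro card_Un_disjoint) auto
  moreover have "card A = card (A \<inter> S) + card (A - S)"
    using assms(1) by (rule card_Int_Diff)
  ultimately show ?thesis
    by simp
qed

definition accepted_codewords :: "nat \<Rightarrow> dtree \<Rightarrow> nat set" where
  "accepted_codewords k t = {y. y < 2^k \<and> eval_tree t (hadamard k y)}"

lemma length_hadamard [simp]: "length (hadamard k y) = 2^k"
  by (simp add: hadamard_def)

lemma accepted_codewords_clamp_queries [simp]:
  "accepted_codewords k (clamp_queries (2^k) t) = accepted_codewords k t"
  by (simp add: accepted_codewords_def eval_tree_clamp_queries)

lemma tester_near_accepted_codewords: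
  assumes "k \<ge> 1" "A \<subseteq> {..<2^k}" "card A = 2^k div 2" "is_tester (2^k) (P_A k A) (1/3) T"
  shows "\<exists>t\<in>set_pmf T. 3 * real (card (sym_diff A (accepted_codewords k t))) \<le> 2^k"
proof -
  define n :: nat where "n = 2^k"
  define B where "B = {..<n} - A"
  have "finite A" "finite B"
    using assms(2) finite_subset unfolding B_def by auto
  have "even n"
    using assms(1) unfolding n_def by simp
  then have card_A: "2 * card A = n"
    using assms(3) unfolding n_def by auto
  have card_B: "card B = card A"
    using assms(2) card_A unfolding B_def n_def by (simp add: card_Diff_subset finite_subset)
  have "y \<in> A \<Longrightarrow> 2/3 \<le> accept_prob T (hadamard k y)" for y
    using assms(4) unfolding is_tester_def P_A_def by auto
  then have accept_A: "card A * (2/3) \<le> (\<Sum>y\<in>A. accept_prob T (hadamard k y))"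
    by (metis sum_bounded_below)
  have "y \<in> B \<Longrightarrow> accept_prob T (hadamard k y) \<le> 1/3" for y
    using assms(2,4) far_hadamard[of A k y "1/3"] unfolding is_tester_def B_def n_def by auto
  then have accept_B: "(\<Sum>y\<in>B. accept_prob T (hadamard k y)) \<le> card B * (1/3)"
    by (metis sum_bounded_above)
  obtain t where "t \<in> set_pmf T" and gap:
    "(\<Sum>y\<in>A. accept_prob T (hadamard k y)) - (\<Sum>y\<in>B. accept_prob T (hadamard k y))
      \<le> real (card {y\<in>A. eval_tree t (hadamard k y)}) - real (card {y\<in>B. eval_tree t (hadamard k y)})"
    using exists_tree_acceptance_gap[OF \<open>finite A\<close> \<open>finite B\<close>] by blast
  define S where "S = accepted_codewords k t"
  have accepted_parts:
    "{y\<in>A. eval_tree t (hadamard k y)} = A \<inter> S" "{y\<in>B. eval_tree t (hadamard k y)} = S - A"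
    using assms(2) unfolding S_def accepted_codewords_def B_def n_def by auto
  have "finite S"
    unfolding S_def accepted_codewords_def by simp
  then have "real (card (sym_diff A S)) + real (card (A \<inter> S)) = real (card A) + real (card (S - A))"
    by (simp only: of_nat_add[symmetric] card_sym_diff[OF \<open>finite A\<close>])
  moreover have "real n = 2 * real (card A)" "real (card B) = real (card A)"
    using card_A card_B by simp_all
  ultimately have "3 * real (card (sym_diff A S)) \<le> n"
    using accept_A accept_B gap unfolding accepted_parts by linarith
  with \<open>t \<in> set_pmf T\<close> show ?thesis
    unfolding S_def n_def by auto
qed

text \<open>A testable A is recovered from a tree of depth at most q with queries in {0..n}
  and a set of at most n/3 corrections.\<close>

lemma card_testable_sets:
  assumes "k \<ge> 1"
  shows "real (card {A. A \<subseteq> {..<2^k} \<and> card A = 2^k div 2 \<and>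
      (\<exists>T. is_tester (2^k) (P_A k A) (1/3) T \<and> makes_at_most T q)})
    \<le> real (card (bounded_trees (2^k) q)) * ((3/2) ^ 2^k * 2 powr (2^k / 3))"
proof -
  define n :: nat where "n = 2^k"
  define G where "G = {A. A \<subseteq> {..<2^k} \<and> card A = 2^k div 2 \<and>
      (\<exists>T. is_tester (2^k) (P_A k A) (1/3) T \<and> makes_at_most T q)}"
  define Ds where "Ds = {D. D \<subseteq> {..<n} \<and> real (card D) \<le> n / 3}"
  have cover: "G \<subseteq> (\<lambda>(t, D). sym_diff (accepted_codewords k t) D) ` (bounded_trees n q \<times> Ds)"
  proof
    fix A assume "A \<in> G"
    then obtain T where A: "A \<subseteq> {..<2^k}" "card A = 2^k div 2"
      and T: "is_tester (2^k) (P_A k A) (1/3) T" "makes_at_most T q"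
      unfolding G_def by auto
    obtain t where "t \<in> set_pmf T" and near: "3 * real (card (sym_diff A (accepted_codewords k t))) \<le> 2^k"
      using tester_near_accepted_codewords[OF assms A T(1)] by blast
    define D where "D = sym_diff A (accepted_codewords k t)"
    have "clamp_queries n t \<in> bounded_trees n q"
      using \<open>t \<in> set_pmf T\<close> T(2) by (intro clamp_queries_in_bounded_trees) (simp add: makes_at_most_def)
    moreover have "D \<in> Ds"
      using near A(1) unfolding D_def Ds_def n_def accepted_codewords_def by auto
    moreover have "A = sym_diff (accepted_codewords k (clamp_queries n t)) D"
      unfolding D_def n_def by auto
    ultimately show "A \<in> (\<lambda>(t, D). sym_diff (accepted_codewords k t) D) ` (bounded_trees n q \<times> Ds)"
      by (auto simp: image_iff)
  qed
  have "finite Ds"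
    unfolding Ds_def by (rule finite_subset[of _ "Pow {..<n}"]) auto
  then have finite_pairs: "finite (bounded_trees n q \<times> Ds)"
    by (simp add: finite_bounded_trees)
  have "card G \<le> card ((\<lambda>(t, D). sym_diff (accepted_codewords k t) D) ` (bounded_trees n q \<times> Ds))"
    using finite_pairs cover by (intro card_mono) simp_all
  also have "\<dots> \<le> card (bounded_trees n q \<times> Ds)"
    by (rule card_image_le[OF finite_pairs])
  also have "\<dots> = card (bounded_trees n q) * card Ds"
    by (rule card_cartesian_product)
  finally have "real (card G) \<le> real (card (bounded_trees n q)) * real (card Ds)"
    by (simp only: of_nat_le_iff of_nat_mult[symmetric])
  also have "\<dots> \<le> real (card (bounded_trees n q)) * ((3/2) ^ n * 2 powr (n / 3))"
    using card_small_subsets[of "{..<n}" "n / 3"] unfolding Ds_def by (intro mult_left_mono) auto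
  finally show ?thesis
    unfolding G_def n_def by simp
qed

lemma powr_27_32:
  "(3/2::real) ^ n * 2 powr (real n / 3) / 2 ^ n = (27/32) powr (real n / 3)"
proof -
  have "(27/32::real) powr (real n / 3) = ((3/4) powr 3 * 2) powr (real n / 3)"
    by (simp add: eval_nat_numeral)
  also have "\<dots> = (3/4) powr real n * 2 powr (real n / 3)"
    by (simp add: powr_mult powr_powr del: powr_numeral)
  also have "(3/4::real) powr real n = (3/2) ^ n / 2 ^ n"
    by (simp add: powr_realpow flip: power_divide)
  finally show ?thesis
    by simp
qed

lemma card_testable_sets_quarter_log:
  assumes "k \<ge> 1"
  shows "real (card {A. A \<subseteq> {..<2^k} \<and> card A = 2^k div 2 \<and>
        (\<exists>T q. is_tester (2^k) (P_A k A) (1/3) T \<and> makes_at_most T q \<and> real q < 1/4 * real k)})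
    \<le> (2^k + 3) powr (2 * 2 powr (real k / 4)) * ((3/2) ^ 2^k * 2 powr (2^k / 3))"
proof -
  define Q where "Q = k div 4"
  define G where "G = {A. A \<subseteq> {..<2^k} \<and> card A = 2^k div 2 \<and>
        (\<exists>T q. is_tester (2^k) (P_A k A) (1/3) T \<and> makes_at_most T q \<and> real q < 1/4 * real k)}"
  define G' where "G' = {A. A \<subseteq> {..<2^k} \<and> card A = 2^k div 2 \<and>
      (\<exists>T. is_tester (2^k) (P_A k A) (1/3) T \<and> makes_at_most T Q)}"
  have "makes_at_most T Q" if "makes_at_most T q" "real q < 1/4 * real k" for T q
    using that unfolding makes_at_most_def Q_def by fastforce
  then have "G \<subseteq> G'"
    unfolding G_def G'_def by blast
  then have "real (card G) \<le> real (card G')"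
    by (auto simp: G'_def intro: card_mono finite_subset[of _ "Pow {..<2^k}"])
  also have "\<dots> \<le> real (card (bounded_trees (2^k) Q)) * ((3/2) ^ 2^k * 2 powr (2^k / 3))"
    unfolding G'_def by (rule card_testable_sets[OF assms])
  also have "\<dots> \<le> (2^k + 3) powr (2 * 2 powr real Q) * ((3/2) ^ 2^k * 2 powr (2^k / 3))"
    using card_bounded_trees_le_powr[of "2^k" Q] by (intro mult_right_mono) auto
  also have "\<dots> \<le> (2^k + 3) powr (2 * 2 powr (real k / 4)) * ((3/2) ^ 2^k * 2 powr (2^k / 3))"
    unfolding Q_def by (intro mult_right_mono powr_mono mult_left_mono) auto
  finally show ?thesis
    unfolding G_def .
qed

lemma testable_fraction_le:
  assumes "k \<ge> 1"
  shows "real (card {A. A \<subseteq> {..<2^k} \<and> card A = 2^k div 2 \<and>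
        (\<exists>T q. is_tester (2^k) (P_A k A) (1/3) T \<and> makes_at_most T q \<and> real q < 1/4 * real k)})
     / real (card {A. A \<subseteq> {..<(2::nat)^k} \<and> card A = 2^k div 2})
     \<le> (2^k + 3) powr (2 * 2 powr (real k / 4)) * (27/32) powr (2^k / 3) * (2^k + 1)"
  (is "?G / ?all \<le> _")
proof -
  define n :: nat where "n = 2^k"
  have "?G / ?all \<le> (real n + 3) powr (2 * 2 powr (real k / 4)) * ((3/2) ^ n * 2 powr (n / 3))
      / (2^n / (real n + 1))"
    using card_testable_sets_quarter_log[OF assms] card_half_subsets_ge[of n]
    unfolding n_def by (intro frac_le) (simp_all add: divide_pos_pos add_pos_pos)
  also have "\<dots> = (real n + 3) powr (2 * 2 powr (real k / 4)) * ((3/2) ^ n * 2 powr (n / 3) / 2^n) * (real n + 1)"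
    by simp
  also have "\<dots> = (real n + 3) powr (2 * 2 powr (real k / 4)) * (27/32) powr (n / 3) * (real n + 1)"
    by (simp only: powr_27_32)
  finally show ?thesis
    unfolding n_def by simp
qed

lemma testable_fraction_bound_tendsto_zero:
  "(\<lambda>k::nat. (2^k + 3) powr (2 * 2 powr (real k / 4)) * (27/32) powr (2^k / 3) * (2^k + 1 :: real))
     \<longlonglongrightarrow> 0"
  by real_asymp

theorem lemma3p3:
  shows "\<exists>c>0. (\<lambda>k::nat.
     real (card {A. A \<subseteq> {..<2^k} \<and> card A = 2^k div 2 \<and>
        (\<exists>T q. is_tester (2^k) (P_A k A) (1/3) T \<and> makes_at_most T q \<and> real q < c * real k)})
     / real (card {A. A \<subseteq> {..<(2::nat)^k} \<and> card A = 2^k div 2}))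
     \<longlonglongrightarrow> 0"
  by (intro exI[of _ "1/4"] conjI tendsto_sandwich[OF _ _ tendsto_const testable_fraction_bound_tendsto_zero]
      eventually_sequentiallyI[of 1] testable_fraction_le) simp_all

end
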